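(* Let $\mathcal{A}$ be an algorithm in the Clique model that computes a function $f$ in $T$ rounds. Then there is a layered circuit $\mathcal{C}$ of depth $2T+1$ over an alphabet $\Sigma$ whose symbols are $b\log n$ bits, which has a $1$-parallel partition (that is, an $n^{\varphi}$-parallel partition with $\varphi=0$), such that $f_{\mathcal{C}}=f$.
   Context: Clique model: $n$ nodes communicate in synchronous rounds; in each round every ordered pair of nodes may exchange a message of $b\log n$ bits, for a fixed constant $b$. $\Sigma$ is an alphabet of size $2^{b\log n}$; each node's input is a string in $\Sigma^n$ and at the end each node holds an output in $\Sigma^M$ for some $M$; the function $f$ maps all inputs to all outputs. Layered circuit of depth $D$ over $\Sigma$: a connected directed graph with gate set $V=V_0\cup V_1\cup\dots\cup V_D$ and wires only from $V_i$ to $V_{i+1}$; each gate $v$ of fan-in $F$ is labeled by a function $f_v:\Sigma^F\to\Sigma$; gates of $V_0$ are input gates outputting the input symbols; the value of any other gate is $f_v$ applied to the values of its in-neighbors; $f_{\mathcal{C}}$ maps the inputs to the values of the gates of $V_D$. $n^{\varphi}$-parallel partition: a partition of each layer $V_i$ into $n$ parts $P_{i,w}$, $w\in\{0,\dots,n-1\}$, such that for all $i,w$ the number of wires from $P_{i,w}$ to gates of $V_{i+1}\setminus P_{i+1,w}$ is $O(n^{1+\varphi})$ and the number of wires into $P_{i+1,w}$ from gates of $V_i\setminus P_{i,w}$ is $O(n^{1+\varphi})$. *)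

theory Defs
  imports Complex_Main "HOL-Library.Log_Nat"
begin

text \<open>Symbols of b log n bits: the alphabet is the set of naturals below 2^(b * ceil(log2 n)).\<close>
definition Sigma :: "nat \<Rightarrow> nat \<Rightarrow> nat set" where
  "Sigma b n = {..< 2 ^ (b * ceillog2 n)}"

text \<open>An input assignment: x w j is the j-th symbol of the input string of node w.\<close>
definition valid_input :: "nat set \<Rightarrow> nat \<Rightarrow> (nat \<Rightarrow> nat \<Rightarrow> nat) \<Rightarrow> bool" where
  "valid_input S n x \<longleftrightarrow> (\<forall>w<n. \<forall>j<n. x w j \<in> S)"

definition inp :: "nat \<Rightarrow> (nat \<Rightarrow> nat \<Rightarrow> nat) \<Rightarrow> nat \<Rightarrow> nat list" where
  "inp n x w = map (x w) [0..<n]"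

text \<open>A deterministic algorithm in the Clique model (full-information form).
  msg r u v xu h : the message node u sends to node v in round r, given u's input string xu
  and the history h of messages u has received so far (h ! r' ! w = message from w in round r').
  out u xu h k : the k-th output symbol of node u after all rounds.\<close>
record clique_alg =
  msg :: "nat \<Rightarrow> nat \<Rightarrow> nat \<Rightarrow> nat list \<Rightarrow> nat list list \<Rightarrow> nat"
  out :: "nat \<Rightarrow> nat list \<Rightarrow> nat list list \<Rightarrow> nat \<Rightarrow> nat"

primrec hist :: "clique_alg \<Rightarrow> nat \<Rightarrow> (nat \<Rightarrow> nat \<Rightarrow> nat) \<Rightarrow> nat \<Rightarrow> nat \<Rightarrow> nat list list" where
  "hist A n x 0 = (\<lambda>u. [])"
| "hist A n x (Suc r) = (\<lambda>u. hist A n x r u @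
      [map (\<lambda>w. msg A r w u (inp n x w) (hist A n x r w)) [0..<n]])"

definition computes_in :: "nat set \<Rightarrow> nat \<Rightarrow> nat \<Rightarrow> clique_alg \<Rightarrow> nat
    \<Rightarrow> ((nat \<Rightarrow> nat \<Rightarrow> nat) \<Rightarrow> nat \<Rightarrow> nat \<Rightarrow> nat) \<Rightarrow> bool" where
  "computes_in S n M A T f \<longleftrightarrow>
     (\<forall>x. valid_input S n x \<longrightarrow>
        (\<forall>r<T. \<forall>u<n. \<forall>v<n. msg A r u v (inp n x u) (hist A n x r u) \<in> S) \<and>
        (\<forall>w<n. \<forall>k<M. out A w (inp n x w) (hist A n x T w) k \<in> S \<and>
                      out A w (inp n x w) (hist A n x T w) k = f x w k))"

text \<open>Gates are natural numbers. layer i = V_i; ins g = list of in-neighbours of g (ordered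
  arguments of the gate function); gfun g = f_g; inlab g = (w,j) means the input gate g outputs
  the j-th input symbol of node w; outlab g = (w,k) means the output gate g gives the k-th output
  symbol of node w.\<close>
record circuit =
  layer :: "nat \<Rightarrow> nat set"
  ins :: "nat \<Rightarrow> nat list"
  gfun :: "nat \<Rightarrow> nat list \<Rightarrow> nat"
  inlab :: "nat \<Rightarrow> nat \<times> nat"
  outlab :: "nat \<Rightarrow> nat \<times> nat"

definition gates :: "circuit \<Rightarrow> nat \<Rightarrow> nat set" where
  "gates C D = (\<Union>i\<le>D. layer C i)"

definition wires :: "circuit \<Rightarrow> nat \<Rightarrow> (nat \<times> nat) set" where
  "wires C D = {(u, g). g \<in> gates C D \<and> u \<in> set (ins C g)}"

definition connected_circuit :: "circuit \<Rightarrow> nat \<Rightarrow> bool" where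
  "connected_circuit C D \<longleftrightarrow> gates C D \<noteq> {} \<and>
     (\<forall>u\<in>gates C D. \<forall>v\<in>gates C D. (u, v) \<in> (wires C D \<union> (wires C D)\<inverse>)\<^sup>*)"

definition layered_circuit :: "nat set \<Rightarrow> nat \<Rightarrow> nat \<Rightarrow> nat \<Rightarrow> circuit \<Rightarrow> bool" where
  "layered_circuit S n M D C \<longleftrightarrow>
     (\<forall>i\<le>D. finite (layer C i)) \<and>
     (\<forall>i\<le>D. \<forall>j\<le>D. i \<noteq> j \<longrightarrow> layer C i \<inter> layer C j = {}) \<and>
     (\<forall>g\<in>gates C D. distinct (ins C g)) \<and>
     (\<forall>g\<in>layer C 0. ins C g = []) \<and>
     bij_betw (inlab C) (layer C 0) ({..<n} \<times> {..<n}) \<and>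
     (\<forall>i<D. \<forall>g\<in>layer C (Suc i). set (ins C g) \<subseteq> layer C i) \<and>
     (\<forall>i<D. \<forall>g\<in>layer C (Suc i). \<forall>xs. length xs = length (ins C g) \<and> set xs \<subseteq> S
          \<longrightarrow> gfun C g xs \<in> S) \<and>
     bij_betw (outlab C) (layer C D) ({..<n} \<times> {..<M}) \<and>
     connected_circuit C D"

primrec gval :: "circuit \<Rightarrow> (nat \<Rightarrow> nat \<Rightarrow> nat) \<Rightarrow> nat \<Rightarrow> nat \<Rightarrow> nat" where
  "gval C x 0 g = x (fst (inlab C g)) (snd (inlab C g))"
| "gval C x (Suc i) g = gfun C g (map (gval C x i) (ins C g))"

definition circuit_computes :: "nat set \<Rightarrow> nat \<Rightarrow> nat \<Rightarrow> circuit
    \<Rightarrow> ((nat \<Rightarrow> nat \<Rightarrow> nat) \<Rightarrow> nat \<Rightarrow> nat \<Rightarrow> nat) \<Rightarrow> bool" where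
  "circuit_computes S n D C f \<longleftrightarrow>
     (\<forall>x. valid_input S n x \<longrightarrow>
        (\<forall>g\<in>layer C D. gval C x D g = f x (fst (outlab C g)) (snd (outlab C g))))"

text \<open>part i g = w means gate g of layer i lies in part P_{i,w}. Wires are counted along the
  in-neighbour lists. The bound O(n^(1+phi)) is witnessed by the constant c.\<close>
definition wires_out :: "circuit \<Rightarrow> (nat \<Rightarrow> nat \<Rightarrow> nat) \<Rightarrow> nat \<Rightarrow> nat \<Rightarrow> nat" where
  "wires_out C part i w =
     (\<Sum>g\<in>{g\<in>layer C (Suc i). part (Suc i) g \<noteq> w}. length (filter (\<lambda>u. part i u = w) (ins C g)))"

definition wires_in :: "circuit \<Rightarrow> (nat \<Rightarrow> nat \<Rightarrow> nat) \<Rightarrow> nat \<Rightarrow> nat \<Rightarrow> nat" where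
  "wires_in C part i w =
     (\<Sum>g\<in>{g\<in>layer C (Suc i). part (Suc i) g = w}. length (filter (\<lambda>u. part i u \<noteq> w) (ins C g)))"

definition parallel_partition :: "real \<Rightarrow> real \<Rightarrow> nat \<Rightarrow> nat \<Rightarrow> circuit \<Rightarrow> (nat \<Rightarrow> nat \<Rightarrow> nat) \<Rightarrow> bool" where
  "parallel_partition c \<phi> n D C part \<longleftrightarrow>
     (\<forall>i\<le>D. \<forall>g\<in>layer C i. part i g < n) \<and>
     (\<forall>i<D. \<forall>w<n. real (wires_out C part i w) \<le> c * real n powr (1 + \<phi>) \<and>
                  real (wires_in C part i w) \<le> c * real n powr (1 + \<phi>))"

end

theory Submission
  imports Defs "HOL-Library.Nat_Bijection"
begin

(* Write (i, u, j) for the j-th gate of node u in layer i; node u's gates form its part.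
   Layer 2r holds the state of every node u after r rounds, i.e. its input followed by all
   messages received so far (n(r+1) symbols). Layer 2r+1 copies the state and appends n gates
   computing the messages u sends, each reading the whole state of u; layer 2r+2 appends the
   received messages, gate (u, n(r+1)+v) reading the single gate of node v that computed the
   message from v to u. The last layer applies the output function to the final state.
   The only wires between different parts are these message wires (plus one wire into each
   output gate (u, 0), added for connectedness), at most one into every gate, so every part
   sends and receives at most n wires between consecutive layers. *)

definition blocks :: "nat \<Rightarrow> nat \<Rightarrow> 'a list \<Rightarrow> 'a list list" where
  "blocks k r xs = map (\<lambda>i. take k (drop (k * i) xs)) [0..<r]"

lemma blocks_Suc: "blocks k (Suc r) xs = take k xs # blocks k r (drop k xs)"
  by (simp add: blocks_def upt_conv_Cons map_Suc_upt[symmetric] algebra_simps del: upt_Suc)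

lemma blocks_concat:
  assumes "\<forall>h\<in>set hs. length h = k"
  shows "blocks k (length hs) (concat hs @ ys) = hs"
  using assms by (induction hs) (simp_all add: blocks_Suc, simp add: blocks_def)

lemma sum_le_card_if_le_one:
  fixes f :: "'a \<Rightarrow> nat"
  assumes "finite X" "finite Y" "\<And>x. x \<in> X \<Longrightarrow> f x \<le> 1" "{x\<in>X. f x \<noteq> 0} \<subseteq> Y"
  shows "sum f X \<le> card Y"
proof -
  have "sum f X = sum f {x\<in>X. f x \<noteq> 0}"
    using assms(1) by (intro sum.mono_neutral_right) auto
  also have "\<dots> \<le> card {x\<in>X. f x \<noteq> 0}"
    using assms(3) sum_mono[of _ f "\<lambda>_. 1"] by fastforce
  also have "\<dots> \<le> card Y"
    using assms(2,4) by (rule card_mono)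
  finally show ?thesis .
qed

lemma hist_length:
  "length (hist A n x r u) = r" "h \<in> set (hist A n x r u) \<Longrightarrow> length h = n"
  by (induction r arbitrary: h) auto

definition gate :: "nat \<Rightarrow> nat \<Rightarrow> nat \<Rightarrow> nat" where
  "gate i u j = prod_encode (i, prod_encode (u, j))"

definition gate_index :: "nat \<Rightarrow> nat \<times> nat \<times> nat" where
  "gate_index g = (case prod_decode g of (i, p) \<Rightarrow> (i, prod_decode p))"

lemma gate_index_gate [simp]: "gate_index (gate i u j) = (i, u, j)"
  by (simp add: gate_def gate_index_def)

lemma gate_eq_iff [simp]: "gate i u j = gate i' u' j' \<longleftrightarrow> i = i' \<and> u = u' \<and> j = j'"
  by (metis gate_index_gate prod.inject)

definition gate_node :: "nat \<Rightarrow> nat \<Rightarrow> nat" where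
  "gate_node i g = fst (snd (gate_index g))"

lemma gate_node_gate [simp]: "gate_node i (gate i' u j) = u"
  by (simp add: gate_node_def)

locale clique_simulation =
  fixes n M T :: nat and A :: clique_alg and S :: "nat set"
  assumes n_pos: "0 < n" and M_pos: "0 < M" and zero_in_S: "0 \<in> S"
begin

definition state_len :: "nat \<Rightarrow> nat" where
  "state_len r = n * Suc r"

definition width :: "nat \<Rightarrow> nat" where
  "width i = (if i = 2 * T + 1 then M
     else if even i then state_len (i div 2) else state_len (i div 2) + n)"

(* msg and out are known to return symbols of S only on actual histories, whereas a gate
   function must map every list over S into S. *)
definition clamp :: "nat \<Rightarrow> nat" where
  "clamp y = (if y \<in> S then y else 0)"

(* The extra input (2T, 0, 0) of the output gates (u, 0) keeps the circuit connected when T = 0,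
   where no message wires exist. *)
definition inputs :: "nat \<Rightarrow> nat \<Rightarrow> nat \<Rightarrow> nat list" where
  "inputs i u j =
    (if i = 0 then []
     else if i = 2 * T + 1 then
       map (gate (2 * T) u) [0..<state_len T] @ (if j = 0 \<and> u \<noteq> 0 then [gate (2 * T) 0 0] else [])
     else if odd i then
       (if j < state_len (i div 2) then [gate (i - 1) u j]
        else map (gate (i - 1) u) [0..<state_len (i div 2)])
     else
       (let s = state_len (i div 2 - 1) in
        if j < s then [gate (i - 1) u j] else [gate (i - 1) (j - s) (s + u)]))"

definition gate_fun :: "nat \<Rightarrow> nat \<Rightarrow> nat \<Rightarrow> nat list \<Rightarrow> nat" where
  "gate_fun i u j xs =
    (if i = 2 * T + 1 then clamp (out A u (take n xs) (blocks n T (drop n xs)) j)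
     else if odd i \<and> state_len (i div 2) \<le> j then
       clamp (msg A (i div 2) u (j - state_len (i div 2))
         (take n xs) (blocks n (i div 2) (drop n xs)))
     else hd xs)"

definition sim_circuit :: circuit where
  "sim_circuit =
    \<lparr> layer = \<lambda>i. (\<lambda>(u, j). gate i u j) ` ({..<n} \<times> {..<width i}),
      ins = \<lambda>g. case gate_index g of (i, u, j) \<Rightarrow> inputs i u j,
      gfun = \<lambda>g. case gate_index g of (i, u, j) \<Rightarrow> gate_fun i u j,
      inlab = \<lambda>g. snd (gate_index g),
      outlab = \<lambda>g. snd (gate_index g) \<rparr>"

lemma sim_circuit_simps [simp]:
  "ins sim_circuit (gate i u j) = inputs i u j"
  "gfun sim_circuit (gate i u j) = gate_fun i u j"
  "inlab sim_circuit (gate i u j) = (u, j)"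
  "outlab sim_circuit (gate i u j) = (u, j)"
  by (simp_all add: sim_circuit_def)

lemma mem_layer_iff:
  "g \<in> layer sim_circuit i \<longleftrightarrow> (\<exists>u j. g = gate i u j \<and> u < n \<and> j < width i)"
  by (auto simp: sim_circuit_def)

lemma gate_mem_layer_iff [simp]:
  "gate i u j \<in> layer sim_circuit i' \<longleftrightarrow> i' = i \<and> u < n \<and> j < width i"
  by (auto simp: mem_layer_iff)

lemma state_len_pos: "0 < state_len r"
  using n_pos by (simp add: state_len_def)

lemma state_len_Suc: "state_len (Suc r) = state_len r + n"
  by (simp add: state_len_def)

lemma layer_Suc_cases:
  assumes "i < 2 * T + 1"
  obtains (final) "i = 2 * T"
    | (send) r where "r < T" "i = 2 * r"
    | (receive) r where "r < T" "i = 2 * r + 1"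
proof (cases "even i")
  case True
  then obtain r where "i = 2 * r" "r \<le> T" using assms by (auto elim!: evenE)
  then show ?thesis using that(1,2) by (cases "r = T") auto
next
  case False
  then show ?thesis using assms that(3) by (auto elim!: oddE)
qed

lemma inputs_input [simp]: "inputs 0 u j = []"
  by (simp add: inputs_def)

lemma inputs_output:
  "inputs (Suc (2 * T)) u j =
     map (gate (2 * T) u) [0..<state_len T] @ (if j = 0 \<and> u \<noteq> 0 then [gate (2 * T) 0 0] else [])"
  by (simp add: inputs_def)

lemma inputs_send:
  "r < T \<Longrightarrow> inputs (Suc (2 * r)) u j =
     (if j < state_len r then [gate (2 * r) u j] else map (gate (2 * r) u) [0..<state_len r])"
  by (simp add: inputs_def)

lemma inputs_receive:
  "inputs (Suc (Suc (2 * r))) u j =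
     (if j < state_len r then [gate (2 * r + 1) u j]
      else [gate (2 * r + 1) (j - state_len r) (state_len r + u)])"
proof -
  have "Suc (2 * r) \<noteq> 2 * T" by presburger
  then show ?thesis by (simp add: inputs_def Let_def)
qed

lemma gate_fun_output:
  "gate_fun (Suc (2 * T)) u j xs = clamp (out A u (take n xs) (blocks n T (drop n xs)) j)"
  by (simp add: gate_fun_def)

lemma gate_fun_send:
  "r < T \<Longrightarrow> state_len r \<le> j \<Longrightarrow> gate_fun (Suc (2 * r)) u j xs =
     clamp (msg A r u (j - state_len r) (take n xs) (blocks n r (drop n xs)))"
  by (simp add: gate_fun_def)

lemma gate_fun_copy:
  "r < T \<Longrightarrow> j < state_len r \<Longrightarrow> gate_fun (Suc (2 * r)) u j xs = hd xs"
  by (simp add: gate_fun_def)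

lemma gate_fun_receive: "gate_fun (Suc (Suc (2 * r))) u j xs = hd xs"
proof -
  have "Suc (2 * r) \<noteq> 2 * T" by presburger
  then show ?thesis by (simp add: gate_fun_def)
qed

lemma width_pos: "0 < width i"
  using M_pos state_len_pos by (simp add: width_def)

lemma width_even [simp]: "width (2 * r) = state_len r"
proof -
  have "2 * r \<noteq> 2 * T + 1" by presburger
  then show ?thesis by (simp add: width_def)
qed

lemma width_input [simp]: "width 0 = n"
  using width_even[of 0] by (simp add: state_len_def)

lemma width_send [simp]: "r < T \<Longrightarrow> width (Suc (2 * r)) = state_len r + n"
  by (simp add: width_def)

lemma width_receive [simp]: "width (Suc (Suc (2 * r))) = state_len r + n"
  using width_even[of "Suc r"] by (simp add: state_len_Suc)

lemma width_output [simp]: "width (Suc (2 * T)) = M"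
  by (simp add: width_def)

definition state :: "(nat \<Rightarrow> nat \<Rightarrow> nat) \<Rightarrow> nat \<Rightarrow> nat \<Rightarrow> nat list" where
  "state x r u = inp n x u @ concat (hist A n x r u)"

definition outbox :: "(nat \<Rightarrow> nat \<Rightarrow> nat) \<Rightarrow> nat \<Rightarrow> nat \<Rightarrow> nat list" where
  "outbox x r u = map (\<lambda>v. msg A r u v (inp n x u) (hist A n x r u)) [0..<n]"

lemma state_Suc: "u < n \<Longrightarrow> state x (Suc r) u = state x r u @ map (\<lambda>w. outbox x r w ! u) [0..<n]"
  by (auto simp: state_def outbox_def intro!: map_cong)

lemma length_state [simp]: "length (state x r u) = state_len r"
proof -
  have "length (concat (hist A n x r u)) = r * n"
    by (induction r) auto
  then show ?thesis by (simp add: state_def state_len_def inp_def)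
qed

lemma state_decode:
  "take n (state x r u @ ys) = inp n x u"
  "blocks n r (drop n (state x r u @ ys)) = hist A n x r u"
  using blocks_concat[of "hist A n x r u" n ys] by (simp_all add: state_def inp_def hist_length)

context
  fixes x :: "nat \<Rightarrow> nat \<Rightarrow> nat"
  assumes messages_in_S: "\<And>r u v. r < T \<Longrightarrow> u < n \<Longrightarrow> v < n \<Longrightarrow> outbox x r u ! v \<in> S"
begin

lemma send_layer_values:
  assumes "r < T" "u < n"
    and state_values:
      "map (\<lambda>j. gval sim_circuit x (2 * r) (gate (2 * r) u j)) [0..<state_len r] = state x r u"
  shows "map (\<lambda>j. gval sim_circuit x (2 * r + 1) (gate (2 * r + 1) u j)) [0..<state_len r + n]
    = state x r u @ outbox x r u" (is "?values = _")
proof (rule nth_equalityI)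
  fix j assume "j < length ?values"
  then have j: "j < state_len r + n" by simp
  have state_nth: "gval sim_circuit x (2 * r) (gate (2 * r) u j) = state x r u ! j"
    if "j < state_len r" for j
    using that arg_cong[OF state_values, of "\<lambda>xs. xs ! j"] by simp
  show "?values ! j = (state x r u @ outbox x r u) ! j"
  proof (cases "j < state_len r")
    case True
    then show ?thesis
      using \<open>r < T\<close> by (simp add: inputs_send gate_fun_copy nth_append state_nth)
  next
    case False
    then have "j - state_len r < n" using j by linarith
    then show ?thesis
      using \<open>r < T\<close> \<open>u < n\<close> False messages_in_S[of r u "j - state_len r"]
      by (simp add: inputs_send gate_fun_send o_def state_values state_decode[of _ _ _ "[]", simplified]
          nth_append clamp_def outbox_def)
  qed
qed (simp add: outbox_def)

lemma receive_layer_values: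
  assumes "u < n"
    and send_values: "\<And>w. w < n \<Longrightarrow>
      map (\<lambda>j. gval sim_circuit x (2 * r + 1) (gate (2 * r + 1) w j)) [0..<state_len r + n]
        = state x r w @ outbox x r w"
  shows "map (\<lambda>j. gval sim_circuit x (2 * Suc r) (gate (2 * Suc r) u j)) [0..<state_len (Suc r)]
    = state x (Suc r) u" (is "?values = _")
proof (rule nth_equalityI)
  fix j assume "j < length ?values"
  then have j: "j < state_len r + n" by (simp add: state_len_Suc)
  have send_nth:
    "gval sim_circuit x (Suc (2 * r)) (gate (Suc (2 * r)) w k) = (state x r w @ outbox x r w) ! k"
    if "w < n" "k < state_len r + n" for w k
    using that arg_cong[OF send_values[OF \<open>w < n\<close>], of "\<lambda>xs. xs ! k"] by simp
  have receive_gate: "gval sim_circuit x (2 * Suc r) (gate (2 * Suc r) u j)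
      = gate_fun (Suc (Suc (2 * r))) u j
          (map (gval sim_circuit x (Suc (2 * r))) (inputs (Suc (Suc (2 * r))) u j))"
    by simp
  show "?values ! j = state x (Suc r) u ! j"
  proof (cases "j < state_len r")
    case True
    then show ?thesis
      using \<open>u < n\<close> receive_gate
      by (simp add: inputs_receive gate_fun_receive send_nth state_Suc nth_append state_len_Suc
          del: gval.simps)
  next
    case False
    then have "j - state_len r < n" using j by linarith
    then show ?thesis
      using \<open>u < n\<close> False j receive_gate
      by (simp add: inputs_receive gate_fun_receive send_nth state_Suc nth_append state_len_Suc outbox_def
          del: gval.simps)
  qed
qed (simp add: state_len_Suc)

lemma state_layer_values:
  "r \<le> T \<Longrightarrow> u < n \<Longrightarrow>
    map (\<lambda>j. gval sim_circuit x (2 * r) (gate (2 * r) u j)) [0..<state_len r] = state x r u"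
proof (induction r arbitrary: u)
  case 0
  then show ?case by (simp add: state_def inp_def state_len_def)
next
  case (Suc r)
  then show ?case
    using receive_layer_values send_layer_values by simp
qed

lemma output_layer_values:
  assumes "u < n"
  shows "gval sim_circuit x (2 * T + 1) (gate (2 * T + 1) u k)
    = clamp (out A u (inp n x u) (hist A n x T u) k)"
proof -
  define extra where
    "extra = map (gval sim_circuit x (2 * T)) (if k = 0 \<and> u \<noteq> 0 then [gate (2 * T) 0 0] else [])"
  have "gval sim_circuit x (2 * T + 1) (gate (2 * T + 1) u k)
      = gate_fun (Suc (2 * T)) u k (state x T u @ extra)"
    using state_layer_values[OF order_refl assms] by (simp add: inputs_output extra_def o_def)
  also have "\<dots> = clamp (out A u (inp n x u) (hist A n x T u) k)"
    by (simp only: gate_fun_output state_decode)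
  finally show ?thesis .
qed

end

lemma sim_circuit_computes:
  assumes "computes_in S n M A T f"
  shows "circuit_computes S n (2 * T + 1) sim_circuit f"
  unfolding circuit_computes_def
proof (intro allI impI ballI)
  fix x g assume "valid_input S n x" and "g \<in> layer sim_circuit (2 * T + 1)"
  then obtain u k where g: "g = gate (2 * T + 1) u k" "u < n" "k < M"
    by (auto simp: mem_layer_iff)
  have "outbox x r u ! v \<in> S" if "r < T" "u < n" "v < n" for r u v
    using assms \<open>valid_input S n x\<close> that by (simp add: computes_in_def outbox_def)
  then have "gval sim_circuit x (2 * T + 1) g = clamp (out A u (inp n x u) (hist A n x T u) k)"
    using output_layer_values g by blast
  also have "\<dots> = f x u k"
    using assms \<open>valid_input S n x\<close> g unfolding computes_in_def clamp_def by metis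
  finally show
    "gval sim_circuit x (2 * T + 1) g = f x (fst (outlab sim_circuit g)) (snd (outlab sim_circuit g))"
    using g by simp
qed

lemma inputs_nonempty: "0 < i \<Longrightarrow> inputs i u j \<noteq> []"
  using state_len_pos by (simp add: inputs_def Let_def)

lemma distinct_inputs: "distinct (inputs i u j)"
  by (auto simp: inputs_def Let_def distinct_map inj_on_def)

lemma gate_fun_in_S: "xs \<noteq> [] \<Longrightarrow> set xs \<subseteq> S \<Longrightarrow> gate_fun i u j xs \<in> S"
  using zero_in_S by (auto simp: gate_fun_def clamp_def)

lemma inputs_in_layer:
  assumes "i < 2 * T + 1" "u < n" "j < width (Suc i)"
  shows "set (inputs (Suc i) u j) \<subseteq> layer sim_circuit i"
  using assms(1)
proof (cases rule: layer_Suc_cases)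
  case final
  then show ?thesis using assms n_pos state_len_pos by (auto simp: inputs_output)
next
  case (send r)
  then show ?thesis using assms by (auto simp: inputs_send)
next
  case (receive r)
  then show ?thesis using assms by (auto simp: inputs_receive)
qed

abbreviation linked :: "nat \<Rightarrow> nat \<Rightarrow> bool" where
  "linked g h \<equiv> (g, h) \<in> (wires sim_circuit (2 * T + 1) \<union> (wires sim_circuit (2 * T + 1))\<inverse>)\<^sup>*"

lemma gate_mem_gates_iff [simp]:
  "gate i u j \<in> gates sim_circuit d \<longleftrightarrow> i \<le> d \<and> u < n \<and> j < width i"
  by (auto simp: gates_def)

lemma linked_sym: "linked g h \<Longrightarrow> linked h g"
  by (metis sym_Un_converse sym_rtrancl symD)

lemma linked_input:
  "i \<le> 2 * T + 1 \<Longrightarrow> u < n \<Longrightarrow> j < width i \<Longrightarrow> h \<in> set (inputs i u j) \<Longrightarrow> linked h (gate i u j)"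
  by (rule r_into_rtrancl) (auto simp: wires_def)

lemma linked_to_input_layer:
  "i \<le> 2 * T + 1 \<Longrightarrow> u < n \<Longrightarrow> j < width i \<Longrightarrow> \<exists>v k. v < n \<and> k < n \<and> linked (gate i u j) (gate 0 v k)"
proof (induction i arbitrary: u j)
  case 0
  then show ?case by auto
next
  case (Suc i)
  define h where "h = hd (inputs (Suc i) u j)"
  have "h \<in> set (inputs (Suc i) u j)"
    using inputs_nonempty by (simp add: h_def)
  moreover have "h \<in> layer sim_circuit i"
    using inputs_in_layer[of i u j] Suc.prems calculation by auto
  then obtain u' j' where "h = gate i u' j'" "u' < n" "j' < width i"
    by (auto simp: mem_layer_iff)
  ultimately show ?case
    using Suc linked_input[of "Suc i" u j h] by (meson Suc_leD linked_sym rtrancl_trans)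
qed

lemma linked_input_row: "u < n \<Longrightarrow> j < n \<Longrightarrow> linked (gate 0 u j) (gate 0 u 0)"
proof -
  assume "u < n" "j < n"
  define k where "k = (if T = 0 then 0 else n)"
  have "k < width 1" "set (map (gate 0 u) [0..<n]) \<subseteq> set (inputs 1 u k)"
    using M_pos n_pos by (auto simp: k_def width_def inputs_def state_len_def)
  then have "gate 0 u j \<in> set (inputs 1 u k)" "gate 0 u 0 \<in> set (inputs 1 u k)"
    using \<open>j < n\<close> n_pos by auto
  then have "linked (gate 0 u j) (gate 1 u k)" "linked (gate 0 u 0) (gate 1 u k)"
    using \<open>u < n\<close> \<open>k < width 1\<close> linked_input[of 1 u k] by auto
  then show ?thesis by (meson linked_sym rtrancl_trans)
qed

lemma inputs_column:
  assumes "i < 2 * T"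
  shows "inputs (Suc i) u 0 = [gate i u 0]"
proof -
  have "i < 2 * T + 1" using assms by simp
  then show ?thesis
    using assms state_len_pos by (cases rule: layer_Suc_cases) (auto simp: inputs_send inputs_receive)
qed

lemma linked_column: "i \<le> 2 * T \<Longrightarrow> u < n \<Longrightarrow> linked (gate 0 u 0) (gate i u 0)"
proof (induction i)
  case (Suc i)
  then have "linked (gate i u 0) (gate (Suc i) u 0)"
    using linked_input[of "Suc i" u 0] width_pos by (simp add: inputs_column)
  then show ?case using Suc by (meson Suc_leD rtrancl_trans)
qed simp

lemma linked_output_row: "u < n \<Longrightarrow> linked (gate (2 * T) u 0) (gate (2 * T) 0 0)"
proof (cases "u = 0")
  case False
  assume "u < n"
  then have "linked (gate (2 * T) u 0) (gate (2 * T + 1) u 0)"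
    "linked (gate (2 * T) 0 0) (gate (2 * T + 1) u 0)"
    using False M_pos state_len_pos linked_input[of "2 * T + 1" u 0] by (auto simp: inputs_output)
  then show ?thesis by (meson linked_sym rtrancl_trans)
qed simp

lemma sim_circuit_connected: "connected_circuit sim_circuit (2 * T + 1)"
proof -
  have linked_root: "linked g (gate 0 0 0)" if "g \<in> gates sim_circuit (2 * T + 1)" for g
  proof -
    obtain i u j where "g = gate i u j" "i \<le> 2 * T + 1" "u < n" "j < width i"
      using \<open>g \<in> gates sim_circuit (2 * T + 1)\<close> by (auto simp: gates_def mem_layer_iff)
    then obtain v k where "v < n" "k < n" "linked g (gate 0 v k)"
      using linked_to_input_layer by blast
    then show ?thesis
      using linked_input_row linked_column[of "2 * T"] linked_output_row n_pos
      by (meson linked_sym order_refl rtrancl_trans)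
  qed
  have "gate 0 0 0 \<in> gates sim_circuit (2 * T + 1)"
    using n_pos by simp
  then show ?thesis
    unfolding connected_circuit_def using linked_root linked_sym by (blast intro: rtrancl_trans)
qed

lemma sim_circuit_layered: "layered_circuit S n M (2 * T + 1) sim_circuit"
  unfolding layered_circuit_def
proof (intro conjI allI impI ballI)
  fix i g assume "i < 2 * T + 1" "g \<in> layer sim_circuit (Suc i)"
  then obtain u j where "g = gate (Suc i) u j" "u < n" "j < width (Suc i)"
    by (auto simp: mem_layer_iff)
  then show "set (ins sim_circuit g) \<subseteq> layer sim_circuit i"
    using inputs_in_layer[OF \<open>i < 2 * T + 1\<close>] by simp
next
  fix i g xs assume "i < 2 * T + 1" "g \<in> layer sim_circuit (Suc i)"
    and "length xs = length (ins sim_circuit g) \<and> set xs \<subseteq> S"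
  moreover have "xs \<noteq> []"
    using inputs_nonempty \<open>g \<in> layer sim_circuit (Suc i)\<close> calculation(3)
    by (auto simp: mem_layer_iff)
  ultimately show "gfun sim_circuit g xs \<in> S"
    using gate_fun_in_S by (auto simp: mem_layer_iff)
next
  show "bij_betw (inlab sim_circuit) (layer sim_circuit 0) ({..<n} \<times> {..<n})"
    by (rule bij_betw_byWitness[where f' = "\<lambda>(u, j). gate 0 u j"]) (auto simp: mem_layer_iff)
next
  show "bij_betw (outlab sim_circuit) (layer sim_circuit (2 * T + 1)) ({..<n} \<times> {..<M})"
    by (rule bij_betw_byWitness[where f' = "\<lambda>(u, j). gate (2 * T + 1) u j"]) (auto simp: mem_layer_iff)
next
  show "connected_circuit sim_circuit (2 * T + 1)" by (rule sim_circuit_connected)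
qed (auto simp: sim_circuit_def gates_def distinct_inputs)

definition crossing_target :: "nat \<Rightarrow> nat \<Rightarrow> nat \<Rightarrow> nat" where
  "crossing_target i v u =
    (if i = 2 * T then gate (2 * T + 1) u 0 else gate (Suc i) u (state_len (i div 2) + v))"

lemma crossing_inputs:
  assumes "i < 2 * T + 1" "u < n" "j < width (Suc i)" "\<not> P u"
  shows "length (filter (\<lambda>h. P (gate_node i h)) (inputs (Suc i) u j)) \<le> 1 \<and>
    (filter (\<lambda>h. P (gate_node i h)) (inputs (Suc i) u j) \<noteq> [] \<longrightarrow>
      (\<exists>v<n. P v \<and> gate (Suc i) u j = crossing_target i v u))"
  using assms(1)
proof (cases rule: layer_Suc_cases)
  case final
  then show ?thesis
    using assms by (auto simp: inputs_output filter_map o_def crossing_target_def intro: n_pos)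
next
  case (send r)
  then show ?thesis
    using assms by (auto simp: inputs_send filter_map o_def)
next
  case (receive r)
  have "Suc (2 * r) \<noteq> 2 * T" by presburger
  moreover have "state_len r \<le> j \<Longrightarrow> j - state_len r < n"
    using receive assms(3) by simp
  ultimately show ?thesis
    using receive assms by (auto simp: inputs_receive crossing_target_def)
qed

lemma crossing_wires_le:
  assumes "i < 2 * T + 1" "\<And>u. Q u \<Longrightarrow> \<not> P u"
  shows "(\<Sum>g\<in>{g \<in> layer sim_circuit (Suc i). Q (gate_node (Suc i) g)}.
      length (filter (\<lambda>h. P (gate_node i h)) (ins sim_circuit g)))
    \<le> card {crossing_target i v u | v u. v < n \<and> u < n \<and> P v \<and> Q u}"
proof (rule sum_le_card_if_le_one)
  show "finite {g \<in> layer sim_circuit (Suc i). Q (gate_node (Suc i) g)}"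
    by (simp add: sim_circuit_def)
  show "finite {crossing_target i v u | v u. v < n \<and> u < n \<and> P v \<and> Q u}"
    using finite_image_set2[of "\<lambda>v. v < n" "\<lambda>u. u < n" "crossing_target i"]
    by (rule rev_finite_subset) auto
next
  fix g assume "g \<in> {g \<in> layer sim_circuit (Suc i). Q (gate_node (Suc i) g)}"
  then obtain u j where "g = gate (Suc i) u j" "u < n" "j < width (Suc i)" "Q u"
    by (auto simp: mem_layer_iff)
  then show "length (filter (\<lambda>h. P (gate_node i h)) (ins sim_circuit g)) \<le> 1"
    using crossing_inputs[of i u j P] assms by simp
next
  show "{g \<in> {g \<in> layer sim_circuit (Suc i). Q (gate_node (Suc i) g)}.
      length (filter (\<lambda>h. P (gate_node i h)) (ins sim_circuit g)) \<noteq> 0}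
    \<subseteq> {crossing_target i v u | v u. v < n \<and> u < n \<and> P v \<and> Q u}"
    using crossing_inputs[of i _ _ P] assms by (fastforce simp: mem_layer_iff)
qed

lemma sim_circuit_partition: "parallel_partition 1 0 n (2 * T + 1) sim_circuit gate_node"
  unfolding parallel_partition_def
proof (intro conjI allI impI ballI)
  fix i g assume "g \<in> layer sim_circuit i"
  then show "gate_node i g < n" by (auto simp: mem_layer_iff)
next
  fix i w assume "i < 2 * T + 1"
  have "wires_out sim_circuit gate_node i w \<le> card (crossing_target i w ` {..<n})"
    unfolding wires_out_def
    using crossing_wires_le[OF \<open>i < 2 * T + 1\<close>, of "\<lambda>u. u \<noteq> w" "\<lambda>v. v = w"]
    by (auto elim!: order_trans intro!: card_mono)
  then have "wires_out sim_circuit gate_node i w \<le> n"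
    using card_image_le[of "{..<n}" "crossing_target i w"] by simp
  moreover have "wires_in sim_circuit gate_node i w \<le> card ((\<lambda>v. crossing_target i v w) ` {..<n})"
    unfolding wires_in_def
    using crossing_wires_le[OF \<open>i < 2 * T + 1\<close>, of "\<lambda>u. u = w" "\<lambda>v. v \<noteq> w"]
    by (auto elim!: order_trans intro!: card_mono)
  then have "wires_in sim_circuit gate_node i w \<le> n"
    using card_image_le[of "{..<n}" "\<lambda>v. crossing_target i v w"] by simp
  ultimately show "real (wires_out sim_circuit gate_node i w) \<le> 1 * real n powr (1 + 0)"
    "real (wires_in sim_circuit gate_node i w) \<le> 1 * real n powr (1 + 0)"
    using n_pos by simp_all
qed

end

theorem lemma1:
  fixes b :: nat
  assumes "0 < b"
  shows "\<exists>c::real. \<forall>n M T (A::clique_alg) f.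
           0 < n \<longrightarrow> 0 < M \<longrightarrow> computes_in (Sigma b n) n M A T f \<longrightarrow>
           (\<exists>C part. layered_circuit (Sigma b n) n M (2 * T + 1) C \<and>
                     parallel_partition c 0 n (2 * T + 1) C part \<and>
                     circuit_computes (Sigma b n) n (2 * T + 1) C f)"
proof (intro exI[of _ 1] allI impI)
  fix n M T A f
  assume "0 < n" "0 < M" and computes: "computes_in (Sigma b n) n M A T f"
  interpret clique_simulation n M T A "Sigma b n"
    using \<open>0 < n\<close> \<open>0 < M\<close> by unfold_locales (simp_all add: Defs.Sigma_def)
  show "\<exists>C part. layered_circuit (Sigma b n) n M (2 * T + 1) C \<and>
      parallel_partition 1 0 n (2 * T + 1) C part \<and> circuit_computes (Sigma b n) n (2 * T + 1) C f"
    using sim_circuit_layered sim_circuit_partition sim_circuit_computes[OF computes] by blast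
qed

end
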